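(* Let $\mathcal M$ be a space of $\mathcal Y$-valued functions contained isometrically in the Arveson space $\mathcal H_{\mathcal Y}(k_d)$ (i.e. $\mathcal M\subseteq\mathcal H_{\mathcal Y}(k_d)$ is a Hilbert space in the norm of $\mathcal H_{\mathcal Y}(k_d)$), and let $T_1,\dots,T_d\in\mathcal L(\mathcal M)$ satisfy, for every $f\in\mathcal M$, $$f(\boldsymbol\lambda)-f(0)=\sum_{j=1}^d\lambda_j(T_jf)(\boldsymbol\lambda)\ \ (\boldsymbol\lambda\in\mathbb B^d)\quad\text{and}\quad\sum_{j=1}^d\|T_jf\|^2\le\|f\|^2-\|f(0)\|^2_{\mathcal Y}.$$ Then $\mathcal M$ is invariant under $M^*_{\lambda_1},\dots,M^*_{\lambda_d}$ and $T_j=M^*_{\lambda_j}|_{\mathcal M}$ for $j=1,\dots,d$.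
   Context: $\mathbb B^d$: open unit ball of $\mathbb C^d$. For $\mathbf n\in\mathbb Z^d_+$: $|\mathbf n|=\sum n_k$, $\mathbf n!=\prod n_k!$, $\boldsymbol\lambda^{\mathbf n}=\prod\lambda_k^{n_k}$. The Arveson space $\mathcal H_{\mathcal Y}(k_d)$ is the Hilbert space of functions $f(\boldsymbol\lambda)=\sum_{\mathbf n}f_{\mathbf n}\boldsymbol\lambda^{\mathbf n}$ on $\mathbb B^d$, $f_{\mathbf n}\in\mathcal Y$, with $\|f\|^2=\sum_{\mathbf n}\frac{\mathbf n!}{|\mathbf n|!}\|f_{\mathbf n}\|^2<\infty$ (reproducing kernel $(1-\langle\boldsymbol\lambda,\boldsymbol\zeta\rangle)^{-1}$). $M_{\lambda_j}$ is multiplication by $\lambda_j$ on $\mathcal H_{\mathcal Y}(k_d)$ and $M^*_{\lambda_j}$ its adjoint. *)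

theory Defs
  imports "HOL-Analysis.Analysis"
begin

text \<open>The complex Hilbert space Y is
modelled as a real Hilbert space 'y (class real_inner + complete_space) together with a complex
structure J (multiplication by the imaginary unit): J is real-linear, J (J x) = -x and J is
orthogonal.  Complex scalar multiplication is  c . y = Re c y + Im c (J y),  and the complex
inner product of Y is recovered from the real one (which is its real part).
The dimension d is a finite index type 'd; points of C^d are complex^'d (Euclidean norm),
multi-indices are nat^'d.\<close>

definition complex_structure :: "('y::real_inner \<Rightarrow> 'y) \<Rightarrow> bool" where
  "complex_structure J \<longleftrightarrow> linear J \<and> (\<forall>x. J (J x) = - x) \<and> (\<forall>x y. inner (J x) (J y) = inner x y)"

definition scaleJ :: "('y::real_inner \<Rightarrow> 'y) \<Rightarrow> complex \<Rightarrow> 'y \<Rightarrow> 'y" where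
  "scaleJ J c y = Re c *\<^sub>R y + Im c *\<^sub>R J y"

text \<open>Complex inner product of Y (linear in the first, conjugate-linear in the second argument).\<close>
definition cinner_y :: "('y::real_inner \<Rightarrow> 'y) \<Rightarrow> 'y \<Rightarrow> 'y \<Rightarrow> complex" where
  "cinner_y J x y = Complex (inner x y) (inner x (J y))"

definition unit_ball_d :: "(complex^'d::finite) set" where
  "unit_ball_d = ball 0 1"

definition mono_pow :: "complex^'d::finite \<Rightarrow> nat^'d \<Rightarrow> complex" where
  "mono_pow z n = (\<Prod>i\<in>UNIV. (z $ i) ^ (n $ i))"

definition abs_mi :: "nat^'d::finite \<Rightarrow> nat" where
  "abs_mi n = (\<Sum>i\<in>UNIV. n $ i)"

definition arv_weight :: "nat^'d::finite \<Rightarrow> real" where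
  "arv_weight n = (\<Prod>i\<in>UNIV. fact (n $ i)) / fact (abs_mi n)"

definition arv_series :: "('y::real_inner \<Rightarrow> 'y) \<Rightarrow> (nat^'d::finite \<Rightarrow> 'y) \<Rightarrow>
    (complex^'d \<Rightarrow> 'y) \<Rightarrow> bool" where
  "arv_series J c f \<longleftrightarrow> (\<forall>z\<in>unit_ball_d. ((\<lambda>n. scaleJ J (mono_pow z n) (c n)) has_sum f z) UNIV)"

text \<open>Functions live on the ball; we normalise them to be 0 outside the ball.\<close>
definition arveson_space :: "('y::real_inner \<Rightarrow> 'y) \<Rightarrow> (complex^'d::finite \<Rightarrow> 'y) set" where
  "arveson_space J = {f. (\<forall>z. z \<notin> unit_ball_d \<longrightarrow> f z = 0) \<and>
       (\<exists>c. arv_series J c f \<and> (\<lambda>n. arv_weight n * (norm (c n))\<^sup>2) summable_on UNIV)}"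

definition arv_coef :: "('y::real_inner \<Rightarrow> 'y) \<Rightarrow> (complex^'d::finite \<Rightarrow> 'y) \<Rightarrow> nat^'d \<Rightarrow> 'y" where
  "arv_coef J f = (THE c. arv_series J c f)"

definition arv_norm :: "('y::real_inner \<Rightarrow> 'y) \<Rightarrow> (complex^'d::finite \<Rightarrow> 'y) \<Rightarrow> real" where
  "arv_norm J f = sqrt (\<Sum>\<^sub>\<infinity>n. arv_weight n * (norm (arv_coef J f n))\<^sup>2)"

definition arv_inner :: "('y::real_inner \<Rightarrow> 'y) \<Rightarrow> (complex^'d::finite \<Rightarrow> 'y) \<Rightarrow>
    (complex^'d \<Rightarrow> 'y) \<Rightarrow> complex" where
  "arv_inner J f g = (\<Sum>\<^sub>\<infinity>n. of_real (arv_weight n) * cinner_y J (arv_coef J f n) (arv_coef J g n))"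

definition mult_coord :: "('y::real_inner \<Rightarrow> 'y) \<Rightarrow> 'd::finite \<Rightarrow> (complex^'d \<Rightarrow> 'y) \<Rightarrow>
    (complex^'d \<Rightarrow> 'y)" where
  "mult_coord J j f = (\<lambda>z. scaleJ J (z $ j) (f z))"

definition mult_coord_adj :: "('y::real_inner \<Rightarrow> 'y) \<Rightarrow> 'd::finite \<Rightarrow> (complex^'d \<Rightarrow> 'y) \<Rightarrow>
    (complex^'d \<Rightarrow> 'y)" where
  "mult_coord_adj J j f = (THE h. h \<in> arveson_space J \<and>
       (\<forall>g\<in>arveson_space J. arv_inner J (mult_coord J j g) f = arv_inner J g h))"

definition isometric_hilbert_subspace :: "('y::real_inner \<Rightarrow> 'y) \<Rightarrow> (complex^'d::finite \<Rightarrow> 'y) set \<Rightarrow> bool" where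
  "isometric_hilbert_subspace J M \<longleftrightarrow> M \<subseteq> arveson_space J \<and> (\<lambda>z. 0) \<in> M \<and>
     (\<forall>f\<in>M. \<forall>g\<in>M. (\<lambda>z. f z + g z) \<in> M) \<and> (\<forall>c. \<forall>f\<in>M. (\<lambda>z. scaleJ J c (f z)) \<in> M) \<and>
     (\<forall>s. (\<forall>n. s n \<in> M) \<longrightarrow> (\<forall>e>0. \<exists>N. \<forall>m\<ge>N. \<forall>n\<ge>N. arv_norm J (\<lambda>z. s m z - s n z) < e) \<longrightarrow>
          (\<exists>f\<in>M. (\<lambda>n. arv_norm J (\<lambda>z. s n z - f z)) \<longlonglongrightarrow> 0))"

definition bounded_op_on :: "('y::real_inner \<Rightarrow> 'y) \<Rightarrow> (complex^'d::finite \<Rightarrow> 'y) set \<Rightarrow>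
    ((complex^'d \<Rightarrow> 'y) \<Rightarrow> (complex^'d \<Rightarrow> 'y)) \<Rightarrow> bool" where
  "bounded_op_on J M T \<longleftrightarrow> (\<forall>f\<in>M. T f \<in> M) \<and>
     (\<forall>f\<in>M. \<forall>g\<in>M. T (\<lambda>z. f z + g z) = (\<lambda>z. T f z + T g z)) \<and>
     (\<forall>c. \<forall>f\<in>M. T (\<lambda>z. scaleJ J c (f z)) = (\<lambda>z. scaleJ J c (T f z))) \<and>
     (\<exists>K. \<forall>f\<in>M. arv_norm J (T f) \<le> K * arv_norm J f)"

end

theory Submission
  imports Defs "HOL-Complex_Analysis.Cauchy_Integral_Formula"
begin

text \<open>
Let a and b_j be the Taylor coefficients of f and of T_j f. By the identity theorem, comparing
coefficients in f(z) - f(0) = sum_j z_j (T_j f)(z) gives a_n = sum_(j: n_j > 0) b_j(n - e_j) for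
n \<noteq> 0. The Arveson weights satisfy w(n - e_j) = w(n) / q_j with q_j = n_j / |n| and sum_j q_j = 1,
so by Cauchy-Schwarz sum_j w(n - e_j) |b_j(n - e_j)|^2 \<ge> w(n) |a_n|^2, with equality only if
b_j(n - e_j) = q_j a_n for all j. Summed over n \<noteq> 0 these inequalities say
sum_j |T_j f|^2 \<ge> |f|^2 - |f(0)|^2, so the hypothesis forces equality for every n:
b_j(m) = (m_j + 1) / (|m| + 1) a_(m + e_j). These are the coefficients of M*_lambda_j f, as one sees
by testing the adjoint relation against monomials.
\<close>

lemma has_sum_sum:
  fixes g :: "'i \<Rightarrow> 'a \<Rightarrow> 'b::topological_comm_monoid_add"
  assumes "finite I" and "\<And>i. i \<in> I \<Longrightarrow> (g i has_sum s i) A"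
  shows "((\<lambda>x. \<Sum>i\<in>I. g i x) has_sum (\<Sum>i\<in>I. s i)) A"
  using assms by (induction I rule: finite_induct) (simp_all add: has_sum_add)

lemma has_sum_diff:
  fixes f g :: "'a \<Rightarrow> 'b::topological_ab_group_add"
  assumes "(f has_sum a) A" and "(g has_sum b) A"
  shows "((\<lambda>x. f x - g x) has_sum a - b) A"
proof -
  have "((\<lambda>x. - g x) has_sum - b) A"
    using assms(2) by (simp add: has_sum_uminus)
  from has_sum_add[OF assms(1) this] show ?thesis
    by simp
qed

section \<open>Multi-indices\<close>

definition mi_unit :: "'d::finite \<Rightarrow> nat^'d" where
  "mi_unit j = (\<chi> i. if i = j then 1 else 0)"

text \<open>If c is the coefficient family of f, then coef_shift j c is that of lambda_j f and
coef_backshift j c is that of M*_lambda_j f.\<close>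

definition coef_shift :: "'d::finite \<Rightarrow> (nat^'d \<Rightarrow> 'a::zero) \<Rightarrow> nat^'d \<Rightarrow> 'a" where
  "coef_shift j c n = (if 0 < n $ j then c (n - mi_unit j) else 0)"

definition coef_backshift :: "'d::finite \<Rightarrow> (nat^'d \<Rightarrow> 'a::real_vector) \<Rightarrow> nat^'d \<Rightarrow> 'a" where
  "coef_backshift j c m = (real (m $ j + 1) / real (abs_mi m + 1)) *\<^sub>R c (m + mi_unit j)"

lemma mi_unit_nth [simp]: "mi_unit j $ i = (if i = j then 1 else 0)"
  by (simp add: mi_unit_def)

lemma add_mi_unit_diff [simp]: "m + mi_unit j - mi_unit j = m"
  by (simp add: vec_eq_iff)

lemma diff_mi_unit_add: "0 < n $ j \<Longrightarrow> n - mi_unit j + mi_unit j = n"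
  by (simp add: vec_eq_iff)

lemma inj_add_mi_unit: "inj (\<lambda>m. m + mi_unit j)"
  by (rule injI) (metis add_mi_unit_diff)

lemma range_add_mi_unit: "range (\<lambda>m. m + mi_unit j) = {n. 0 < n $ j}"
  by (auto simp: image_iff intro: diff_mi_unit_add[symmetric])

lemma nth_le_abs_mi: "n $ i \<le> abs_mi n"
  unfolding abs_mi_def by (rule member_le_sum) auto

lemma abs_mi_add_mi_unit: "abs_mi (m + mi_unit j) = abs_mi m + 1"
  by (simp add: abs_mi_def sum.distrib)

lemma abs_mi_pos: "n \<noteq> 0 \<Longrightarrow> 0 < abs_mi n"
  by (metis gr0I le_zero_eq nth_le_abs_mi vec_eq_iff zero_index)

lemma finite_abs_mi_eq: "finite {n::nat^'d::finite. abs_mi n = k}"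
proof (rule finite_subset)
  show "{n::nat^'d. abs_mi n = k} \<subseteq> vec_lambda ` (PiE UNIV (\<lambda>_. {..k}))"
  proof
    fix n :: "nat^'d" assume "n \<in> {n. abs_mi n = k}"
    then have "(\<lambda>i. n $ i) \<in> PiE UNIV (\<lambda>_. {..k})"
      using nth_le_abs_mi by auto
    then show "n \<in> vec_lambda ` (PiE UNIV (\<lambda>_. {..k}))"
      by (metis image_eqI vec_nth_inverse)
  qed
qed (intro finite_imageI finite_PiE; simp)

lemma mono_pow_0 [simp]: "mono_pow z 0 = 1"
  by (simp add: mono_pow_def)

lemma mono_pow_add_mi_unit: "mono_pow z (m + mi_unit j) = z $ j * mono_pow z m"
proof -
  have "mono_pow z (m + mi_unit j) = (\<Prod>i\<in>UNIV. (z $ i) ^ (m $ i) * (if i = j then z $ i else 1))"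
    unfolding mono_pow_def by (intro prod.cong) (auto simp: power_add)
  then show ?thesis
    by (simp add: prod.distrib mono_pow_def)
qed

lemma mono_pow_scale: "mono_pow (\<chi> i. t * w $ i) n = t ^ abs_mi n * mono_pow w n"
  by (simp add: mono_pow_def abs_mi_def power_mult_distrib prod.distrib power_sum)

lemma arv_weight_pos: "0 < arv_weight n"
  by (simp add: arv_weight_def prod_pos)

lemma arv_weight_0 [simp]: "arv_weight 0 = 1"
  by (simp add: arv_weight_def abs_mi_def)

lemma arv_weight_add_mi_unit:
  "arv_weight (m + mi_unit j) = arv_weight m * (real (m $ j + 1) / real (abs_mi m + 1))"
proof -
  have "(\<Prod>i\<in>UNIV. fact ((m + mi_unit j) $ i) :: real)
      = (\<Prod>i\<in>UNIV. (if i = j then real (m $ i + 1) else 1) * fact (m $ i))"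
    by (intro prod.cong) auto
  then have "(\<Prod>i\<in>UNIV. fact ((m + mi_unit j) $ i) :: real) = real (m $ j + 1) * (\<Prod>i\<in>UNIV. fact (m $ i))"
    by (simp add: prod.distrib)
  then show ?thesis
    by (simp add: arv_weight_def abs_mi_add_mi_unit field_simps)
qed

lemma arv_weight_diff_mi_unit:
  assumes "0 < n $ j"
  shows "arv_weight (n - mi_unit j) = arv_weight n * real (abs_mi n) / real (n $ j)"
proof -
  define m where "m = n - mi_unit j"
  have n: "n = m + mi_unit j"
    using assms by (simp add: m_def diff_mi_unit_add)
  show ?thesis
    unfolding n arv_weight_add_mi_unit abs_mi_add_mi_unit m_def[symmetric] by simp
qed

lemma coef_shift_0 [simp]: "coef_shift j c 0 = 0"
  by (simp add: coef_shift_def)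

lemma coef_shift_add_mi_unit [simp]: "coef_shift j c (m + mi_unit j) = c m"
  by (simp add: coef_shift_def)

lemma has_sum_coef_shift_iff:
  fixes g :: "nat^'d::finite \<Rightarrow> 'a::{comm_monoid_add,topological_space}"
  shows "(coef_shift j g has_sum s) UNIV \<longleftrightarrow> (g has_sum s) UNIV"
proof -
  have "(coef_shift j g has_sum s) UNIV \<longleftrightarrow> (coef_shift j g has_sum s) (range (\<lambda>m. m + mi_unit j))"
    by (rule has_sum_cong_neutral) (auto simp: range_add_mi_unit coef_shift_def)
  also have "\<dots> \<longleftrightarrow> ((coef_shift j g \<circ> (\<lambda>m. m + mi_unit j)) has_sum s) UNIV"
    by (rule has_sum_reindex[OF inj_add_mi_unit])
  finally show ?thesis
    by (simp add: o_def)
qed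

lemma infsum_coef_shift:
  fixes g :: "nat^'d::finite \<Rightarrow> 'a::{comm_monoid_add,t2_space}"
  shows "infsum (coef_shift j g) UNIV = infsum g UNIV"
proof -
  have "infsum (coef_shift j g) UNIV = infsum (coef_shift j g) (range (\<lambda>m. m + mi_unit j))"
    by (rule infsum_cong_neutral) (auto simp: range_add_mi_unit coef_shift_def)
  also have "\<dots> = infsum (coef_shift j g \<circ> (\<lambda>m. m + mi_unit j)) UNIV"
    by (rule infsum_reindex[OF inj_add_mi_unit])
  finally show ?thesis
    by (simp add: o_def)
qed

section \<open>Identity theorem for power series in several variables\<close>

lemma powser_zero_imp_coeff_zero:
  fixes a :: "nat \<Rightarrow> 'a::{real_normed_field,banach}"
  assumes "0 < r" and "\<And>x. norm x < r \<Longrightarrow> (\<lambda>n. a n * x ^ n) sums 0"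
  shows "a m = 0"
proof (rule ccontr)
  assume "a m \<noteq> 0"
  show False
  proof (cases "m = 0")
    case True
    then show False
      using \<open>a m \<noteq> 0\<close> assms by (metis norm_zero powser_sums_zero_iff)
  next
    case False
    \<comment> \<open>a nonzero coefficient of positive degree would make 0 an isolated zero of the sum\<close>
    obtain s where "0 < s" and "\<And>z::'a. z \<in> cball 0 s - {0} \<Longrightarrow> 0 \<noteq> (0::'a)"
      by (rule powser_0_nonzero[where r=r and a=a and \<xi>=0 and f="\<lambda>_. 0" and m=m])
        (use assms \<open>a m \<noteq> 0\<close> False in auto)
    moreover have "(of_real s :: 'a) \<in> cball 0 s - {0}"
      using \<open>0 < s\<close> by simp
    ultimately show False
      by blast
  qed
qed

lemma norm_vec_scale: "norm ((\<chi> i. t * w $ i) :: complex^'d::finite) = cmod t * norm w"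
  by (simp add: norm_vec_def L2_set_def norm_mult power_mult_distrib
      sum_distrib_left[symmetric] real_sqrt_mult)

text \<open>Substituting z = t w turns the series into a power series in t whose coefficients are the
homogeneous parts.\<close>

lemma homogeneous_part_eq_0:
  fixes \<alpha> :: "nat^'d::finite \<Rightarrow> complex"
  assumes zero: "\<And>z. z \<in> unit_ball_d \<Longrightarrow> ((\<lambda>n. mono_pow z n * \<alpha> n) has_sum 0) UNIV"
    and w: "norm w < 1"
  shows "(\<Sum>n | abs_mi n = k. mono_pow w n * \<alpha> n) = 0"
proof -
  define P where "P k = (\<Sum>n | abs_mi n = k. mono_pow w n * \<alpha> n)" for k
  have "(\<lambda>k. P k * t ^ k) sums 0" if t: "norm t < 1" for t
  proof -
    define z where "z = (\<chi> i. t * w $ i)"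
    have "norm z < 1"
      using t w mult_left_le_one_le[of "norm w" "cmod t"] by (simp add: z_def norm_vec_scale)
    then have "((\<lambda>n. t ^ abs_mi n * mono_pow w n * \<alpha> n) has_sum 0) UNIV"
      using zero[of z] by (simp add: unit_ball_d_def z_def mono_pow_scale)
    then have "((\<lambda>p. t ^ fst p * mono_pow w (snd p) * \<alpha> (snd p)) has_sum 0)
        ((\<lambda>n. (abs_mi n, n)) ` UNIV)"
      by (subst has_sum_reindex) (auto simp: inj_on_def o_def)
    also have "(\<lambda>n. (abs_mi n, n)) ` UNIV = Sigma UNIV (\<lambda>k. {n. abs_mi n = k})"
      by auto
    finally have "((\<lambda>k. \<Sum>n | abs_mi n = k. t ^ k * mono_pow w n * \<alpha> n) has_sum 0) UNIV"
      by (rule has_sum_Sigma') (auto intro: has_sum_finiteI finite_abs_mi_eq)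
    then show ?thesis
      by (auto dest!: has_sum_imp_sums simp: P_def sum_distrib_left mult_ac)
  qed
  then have "P k = 0"
    by (intro powser_zero_imp_coeff_zero[of 1]) auto
  then show ?thesis
    by (simp add: P_def)
qed

lemma sum_digits_less_power:
  fixes f :: "nat \<Rightarrow> nat"
  assumes "\<forall>j<L. f j < B"
  shows "(\<Sum>j<L. f j * B ^ j) < B ^ L"
  using assms
proof (induction L)
  case 0
  then show ?case by simp
next
  case (Suc L)
  then have "(\<Sum>j<L. f j * B ^ j) < B ^ L" and "f L * B ^ L \<le> (B - 1) * B ^ L"
    by auto
  moreover have "B ^ L + (B - 1) * B ^ L = B ^ Suc L"
    using Suc.prems by (cases B) auto
  ultimately show ?case
    using sum.lessThan_Suc[of "\<lambda>j. f j * B ^ j" L] by linarith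
qed

lemma sum_digits_eq_imp_eq:
  fixes f g :: "nat \<Rightarrow> nat"
  assumes "\<forall>j<L. f j < B" and "\<forall>j<L. g j < B"
    and "(\<Sum>j<L. f j * B ^ j) = (\<Sum>j<L. g j * B ^ j)" and "j < L"
  shows "f j = g j"
  using assms
proof (induction L arbitrary: j)
  case 0
  then show ?case by simp
next
  case (Suc L)
  have less: "(\<Sum>j<L. f j * B ^ j) < B ^ L" "(\<Sum>j<L. g j * B ^ j) < B ^ L"
    using Suc.prems by (auto intro: sum_digits_less_power)
  have eq: "(\<Sum>j<L. f j * B ^ j) + f L * B ^ L = (\<Sum>j<L. g j * B ^ j) + g L * B ^ L"
    using Suc.prems(3) by simp
  have leading_digit: "(s + c * b) div b = c" if "s < b" for s c b :: nat
    using that by simp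
  have "f L = g L"
    using leading_digit[OF less(1), of "f L"] leading_digit[OF less(2), of "g L"] eq by simp
  show ?case
  proof (cases "j = L")
    case False
    with Suc.prems \<open>f L = g L\<close> eq show ?thesis
      by (intro Suc.IH) auto
  qed (use \<open>f L = g L\<close> in simp)
qed

lemma inj_on_digit_encoding:
  fixes \<sigma> :: "'d::finite \<Rightarrow> nat"
  assumes "inj \<sigma>" and "range \<sigma> = {..<L}" and digits: "\<And>n i. n \<in> S \<Longrightarrow> n $ i < B"
  shows "inj_on (\<lambda>n::nat^'d. \<Sum>i\<in>UNIV. n $ i * B ^ \<sigma> i) S"
proof (rule inj_onI)
  fix n n' :: "nat^'d"
  assume n: "n \<in> S" "n' \<in> S" and eq: "(\<Sum>i\<in>UNIV. n $ i * B ^ \<sigma> i) = (\<Sum>i\<in>UNIV. n' $ i * B ^ \<sigma> i)"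
  have reindex: "(\<Sum>i\<in>UNIV. x $ i * B ^ \<sigma> i) = (\<Sum>j<L. x $ inv \<sigma> j * B ^ j)" for x :: "nat^'d"
    using sum.reindex[OF \<open>inj \<sigma>\<close>, of "\<lambda>j. x $ inv \<sigma> j * B ^ j"] assms(1,2) by simp
  have "n $ inv \<sigma> j = n' $ inv \<sigma> j" if "j < L" for j
    using sum_digits_eq_imp_eq[of L "\<lambda>j. n $ inv \<sigma> j" B "\<lambda>j. n' $ inv \<sigma> j"] digits n eq that
    by (simp add: reindex)
  then have "n $ i = n' $ i" for i
    using assms(1,2) by (metis inv_f_f lessThan_iff rangeI)
  then show "n = n'"
    by (simp add: vec_eq_iff)
qed

lemma norm_vec_power_le:
  fixes s :: complex
  assumes "norm s \<le> 1" and "\<And>i. 0 < k i"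
  shows "norm ((\<chi> i. s ^ k i) :: complex^'d::finite) \<le> real CARD('d) * norm s"
proof -
  have "norm (s ^ k i) \<le> norm s" for i
    using power_decreasing[of 1 "k i" "norm s"] assms by (simp add: norm_power Suc_le_eq)
  then show ?thesis
    using L2_set_le_sum[of UNIV "\<lambda>i. norm (s ^ k i)"] sum_mono[of UNIV "\<lambda>i. norm (s ^ k i)" "\<lambda>_. norm s"]
    by (simp add: norm_vec_def)
qed

text \<open>Substituting z_i = s^(B^\<sigma>(i)) with B larger than all entries turns the distinct monomials of
a polynomial into distinct powers of s.\<close>

lemma polynomial_eq_0_imp_coeff_eq_0:
  fixes \<alpha> :: "nat^'d::finite \<Rightarrow> complex"
  assumes "finite S" and zero: "\<And>w. norm w < 1 \<Longrightarrow> (\<Sum>n\<in>S. mono_pow w n * \<alpha> n) = 0"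
    and "n\<^sub>0 \<in> S"
  shows "\<alpha> n\<^sub>0 = 0"
proof -
  obtain \<sigma> :: "'d \<Rightarrow> nat" and L where \<sigma>: "inj \<sigma>" "range \<sigma> = {..<L}"
    using finite_imp_inj_to_nat_seg[of "UNIV :: 'd set"] by (auto simp: lessThan_def)
  define B where "B = Suc (\<Sum>n\<in>S. abs_mi n)"
  have digits: "n $ i < B" if "n \<in> S" for n i
    using nth_le_abs_mi[of n i] member_le_sum[OF that, of abs_mi] \<open>finite S\<close> by (simp add: B_def)
  define e where "e = (\<lambda>n::nat^'d. \<Sum>i\<in>UNIV. n $ i * B ^ \<sigma> i)"
  have inj: "inj_on e S"
    unfolding e_def using \<sigma> digits by (rule inj_on_digit_encoding)
  define \<beta> where "\<beta> m = (if m \<in> e ` S then \<alpha> (inv_into S e m) else 0)" for m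
  define r :: real where "r = 1 / (real CARD('d) + 1)"
  have "(\<lambda>m. \<beta> m * s ^ m) sums 0" if s: "norm s < r" for s :: complex
  proof -
    define w where "w = (\<chi> i. s ^ (B ^ \<sigma> i))"
    have "r \<le> 1"
      by (simp add: r_def)
    with s have "norm w \<le> real CARD('d) * norm s"
      unfolding w_def by (intro norm_vec_power_le) (auto simp: B_def)
    also have "\<dots> \<le> real CARD('d) * r"
      using s by (intro mult_left_mono) auto
    also have "\<dots> < 1"
      by (simp add: r_def field_simps)
    finally have "(\<Sum>n\<in>S. mono_pow w n * \<alpha> n) = 0"
      by (rule zero)
    moreover have "mono_pow w n = s ^ e n" for n
      by (simp add: mono_pow_def w_def e_def power_sum power_mult[symmetric] mult.commute)
    moreover have "(\<Sum>n\<in>S. s ^ e n * \<alpha> n) = (\<Sum>m\<in>e ` S. \<beta> m * s ^ m)"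
      using inj by (simp add: sum.reindex \<beta>_def mult.commute)
    moreover have "(\<lambda>m. \<beta> m * s ^ m) sums (\<Sum>m\<in>e ` S. \<beta> m * s ^ m)"
      by (rule sums_finite) (auto simp: \<beta>_def \<open>finite S\<close>)
    ultimately show ?thesis
      by simp
  qed
  then have "\<beta> (e n\<^sub>0) = 0"
    by (intro powser_zero_imp_coeff_zero[of r]) (auto simp: r_def)
  then show ?thesis
    using \<open>n\<^sub>0 \<in> S\<close> inj by (simp add: \<beta>_def)
qed

lemma mono_series_zero_imp_coeff_zero:
  fixes \<alpha> :: "nat^'d::finite \<Rightarrow> complex"
  assumes "\<And>z. z \<in> unit_ball_d \<Longrightarrow> ((\<lambda>n. mono_pow z n * \<alpha> n) has_sum 0) UNIV"
  shows "\<alpha> n = 0"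
proof (rule polynomial_eq_0_imp_coeff_eq_0)
  show "finite {m. abs_mi m = abs_mi n}"
    by (rule finite_abs_mi_eq)
  show "n \<in> {m. abs_mi m = abs_mi n}"
    by simp
qed (rule homogeneous_part_eq_0[OF assms])

section \<open>Complex structures\<close>

locale complex_structured_space =
  fixes J :: "'y::real_inner \<Rightarrow> 'y"
  assumes complex_structure: "complex_structure J"
begin

lemma linear_J: "linear J"
  using complex_structure by (simp add: complex_structure_def)

lemma J_J [simp]: "J (J x) = - x"
  using complex_structure by (simp add: complex_structure_def)

lemma inner_J_J [simp]: "inner (J x) (J y) = inner x y"
  using complex_structure by (simp add: complex_structure_def)

lemma inner_J_left: "inner (J x) y = - inner x (J y)"
  using inner_J_J[of x "J y"] linear_J by (simp add: linear_neg)

lemma bounded_linear_J: "bounded_linear J"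
proof (rule bounded_linear_intro[where K=1])
  show "norm (J x) \<le> norm x * 1" for x
    by (simp add: norm_eq_sqrt_inner)
qed (use linear_J in \<open>simp_all add: linear_add linear_scale\<close>)

lemma bounded_linear_scaleJ: "bounded_linear (scaleJ J c)"
  unfolding scaleJ_def[abs_def]
  by (intro bounded_linear_add bounded_linear_scaleR_right bounded_linear_ident
      bounded_linear_compose[OF bounded_linear_scaleR_right bounded_linear_J])

lemma linear_scaleJ: "linear (scaleJ J c)"
  using bounded_linear_scaleJ by (rule bounded_linear.linear)

lemma scaleJ_add_right: "scaleJ J c (x + y) = scaleJ J c x + scaleJ J c y"
  using linear_scaleJ by (rule linear_add)

lemma scaleJ_diff_right: "scaleJ J c (x - y) = scaleJ J c x - scaleJ J c y"
  using linear_scaleJ by (rule linear_diff)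

lemma scaleJ_sum_right: "scaleJ J c (sum f A) = (\<Sum>a\<in>A. scaleJ J c (f a))"
  using linear_scaleJ by (rule linear_sum)

lemma scaleJ_0_right [simp]: "scaleJ J c 0 = 0"
  using linear_scaleJ by (rule linear_0)

lemma scaleJ_1 [simp]: "scaleJ J 1 x = x"
  by (simp add: scaleJ_def)

lemma scaleJ_mult: "scaleJ J (c * d) x = scaleJ J c (scaleJ J d x)"
  using linear_J by (simp add: scaleJ_def linear_add linear_scale algebra_simps)

lemma cinner_y_scaleJ_left: "cinner_y J (scaleJ J c x) y = c * cinner_y J x y"
  by (simp add: cinner_y_def scaleJ_def inner_J_left complex_eq_iff algebra_simps)

lemma cinner_y_scaleR_right: "cinner_y J x (r *\<^sub>R y) = of_real r * cinner_y J x y"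
  using linear_J by (simp add: cinner_y_def linear_scale complex_eq_iff)

lemma cinner_y_0_left [simp]: "cinner_y J 0 y = 0"
  by (simp add: cinner_y_def complex_eq_iff)

lemma Re_cinner_y: "Re (cinner_y J x y) = inner x y"
  by (simp add: cinner_y_def)

lemma bounded_linear_cinner_y_left: "bounded_linear (\<lambda>x. cinner_y J x y)"
proof -
  have "bounded_linear (\<lambda>x. of_real (inner x y) + \<i> * of_real (inner x (J y)) :: complex)"
    by (intro bounded_linear_add bounded_linear_compose[OF bounded_linear_mult_right]
        bounded_linear_compose[OF bounded_linear_of_real] bounded_linear_inner_left)
  moreover have "(\<lambda>x. of_real (inner x y) + \<i> * of_real (inner x (J y)) :: complex) = (\<lambda>x. cinner_y J x y)"
    by (auto simp: cinner_y_def complex_eq_iff)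
  ultimately show ?thesis
    by simp
qed

end

section \<open>The Arveson space\<close>

lemma arv_norm_power2: "(arv_norm J h)\<^sup>2 = (\<Sum>\<^sub>\<infinity>n. arv_weight n * (norm (arv_coef J h n))\<^sup>2)"
  unfolding arv_norm_def
  by (simp add: infsum_nonneg less_imp_le[OF arv_weight_pos])

definition arv_monomial :: "('y::real_inner \<Rightarrow> 'y) \<Rightarrow> nat^'d::finite \<Rightarrow> 'y \<Rightarrow> complex^'d \<Rightarrow> 'y" where
  "arv_monomial J n v = (\<lambda>z. if z \<in> unit_ball_d then scaleJ J (mono_pow z n) v else 0)"

context complex_structured_space
begin

lemma scaleJ_series_zero_imp_coeff_zero:
  fixes c :: "nat^'d::finite \<Rightarrow> 'y"
  assumes "\<And>z. z \<in> unit_ball_d \<Longrightarrow> ((\<lambda>n. scaleJ J (mono_pow z n) (c n)) has_sum 0) UNIV"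
  shows "c n = 0"
proof -
  have "cinner_y J (c n) y = 0" for y
  proof (rule mono_series_zero_imp_coeff_zero[where \<alpha>="\<lambda>n. cinner_y J (c n) y"])
    fix z :: "complex^'d" assume "z \<in> unit_ball_d"
    from has_sum_bounded_linear[OF bounded_linear_cinner_y_left assms[OF this]]
    show "((\<lambda>n. mono_pow z n * cinner_y J (c n) y) has_sum 0) UNIV"
      by (simp add: cinner_y_scaleJ_left)
  qed
  from arg_cong[OF this[of "c n"], of Re] show ?thesis
    by (simp add: Re_cinner_y)
qed

lemma arv_series_unique:
  assumes "arv_series J c f" and "arv_series J c' f"
  shows "c = c'"
proof
  fix n
  have "((\<lambda>n. scaleJ J (mono_pow z n) (c n - c' n)) has_sum 0) UNIV" if "z \<in> unit_ball_d" for z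
  proof -
    have "((\<lambda>n. scaleJ J (mono_pow z n) (c n) - scaleJ J (mono_pow z n) (c' n)) has_sum f z - f z) UNIV"
      using assms that unfolding arv_series_def by (intro has_sum_diff) auto
    then show ?thesis
      by (simp add: scaleJ_diff_right)
  qed
  from scaleJ_series_zero_imp_coeff_zero[OF this] show "c n = c' n"
    by simp
qed

lemma arv_coef_eqI: "arv_series J c f \<Longrightarrow> arv_coef J f = c"
  unfolding arv_coef_def by (rule the_equality) (auto dest: arv_series_unique)

lemma arveson_spaceD:
  assumes "h \<in> arveson_space J"
  shows "arv_series J (arv_coef J h) h"
    and "(\<lambda>n. arv_weight n * (norm (arv_coef J h n))\<^sup>2) summable_on UNIV"
  using assms arv_coef_eqI by (auto simp: arveson_space_def)

lemma arveson_space_eqI: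
  assumes "h \<in> arveson_space J" and "h' \<in> arveson_space J" and "arv_coef J h = arv_coef J h'"
  shows "h = h'"
proof
  fix z
  show "h z = h' z"
  proof (cases "z \<in> unit_ball_d")
    case True
    have "((\<lambda>n. scaleJ J (mono_pow z n) (arv_coef J h n)) has_sum h z) UNIV"
      using arveson_spaceD(1)[OF assms(1)] True by (simp add: arv_series_def)
    moreover have "((\<lambda>n. scaleJ J (mono_pow z n) (arv_coef J h n)) has_sum h' z) UNIV"
      using arveson_spaceD(1)[OF assms(2)] True assms(3) by (simp add: arv_series_def)
    ultimately show ?thesis
      by (rule has_sum_unique)
  next
    case False
    then show ?thesis
      using assms(1,2) by (simp add: arveson_space_def)
  qed
qed

lemma has_sum_scaleJ_coef_shift:
  assumes "((\<lambda>n. scaleJ J (mono_pow z n) (c n)) has_sum s) UNIV"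
  shows "((\<lambda>n. scaleJ J (mono_pow z n) (coef_shift j c n)) has_sum scaleJ J (z $ j) s) UNIV"
proof -
  have "(\<lambda>n. scaleJ J (mono_pow z n) (coef_shift j c n))
      = coef_shift j (\<lambda>m. scaleJ J (z $ j) (scaleJ J (mono_pow z m) (c m)))"
    by (auto simp: coef_shift_def fun_eq_iff mono_pow_add_mi_unit[symmetric] diff_mi_unit_add
        scaleJ_mult[symmetric])
  then show ?thesis
    using has_sum_bounded_linear[OF bounded_linear_scaleJ assms] by (simp add: has_sum_coef_shift_iff)
qed

lemma arv_series_mult_coord:
  "arv_series J c g \<Longrightarrow> arv_series J (coef_shift j c) (mult_coord J j g)"
  unfolding arv_series_def mult_coord_def by (blast intro: has_sum_scaleJ_coef_shift)

lemma arv_series_monomial: "arv_series J (\<lambda>m. if m = n then v else 0) (arv_monomial J n v)"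
  unfolding arv_series_def arv_monomial_def
  by (auto intro!: has_sum_finite_neutralI[where B="{n}"] split: if_split_asm)

lemma arv_monomial_in_arveson_space: "arv_monomial J n v \<in> arveson_space J"
proof -
  have "(\<lambda>m. arv_weight m * (norm (if m = n then v else 0))\<^sup>2) summable_on UNIV"
    by (rule has_sum_imp_summable, rule has_sum_finite_neutralI[where B="{n}"]) auto
  then show ?thesis
    using arv_series_monomial by (auto simp: arveson_space_def arv_monomial_def)
qed

lemma arv_inner_monomial_left:
  "arv_inner J (arv_monomial J n v) h = of_real (arv_weight n) * cinner_y J v (arv_coef J h n)"
  unfolding arv_inner_def arv_coef_eqI[OF arv_series_monomial]
  by (intro infsumI has_sum_finite_neutralI[where B="{n}"]) auto

lemma arv_inner_extensionality:
  assumes "h \<in> arveson_space J" and "h' \<in> arveson_space J"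
    and "\<And>g. g \<in> arveson_space J \<Longrightarrow> arv_inner J g h = arv_inner J g h'"
  shows "h = h'"
proof (rule arveson_space_eqI[OF assms(1,2)], rule ext)
  fix n
  define v where "v = arv_coef J h n - arv_coef J h' n"
  have "of_real (arv_weight n) * cinner_y J v (arv_coef J h n)
      = of_real (arv_weight n) * cinner_y J v (arv_coef J h' n)"
    using assms(3)[OF arv_monomial_in_arveson_space] by (simp add: arv_inner_monomial_left)
  then have "cinner_y J v (arv_coef J h n) = cinner_y J v (arv_coef J h' n)"
    using arv_weight_pos[of n] by simp
  then have "inner v (arv_coef J h n) = inner v (arv_coef J h' n)"
    by (metis Re_cinner_y)
  then have "inner v v = 0"
    by (simp add: v_def inner_diff_right)
  then show "arv_coef J h n = arv_coef J h' n"
    by (simp add: v_def)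
qed

lemma arv_inner_mult_coord:
  assumes g: "arv_series J c g" and f: "arv_series J a f"
    and h: "arv_series J (coef_backshift j a) h"
  shows "arv_inner J (mult_coord J j g) f = arv_inner J g h"
proof -
  have "arv_inner J (mult_coord J j g) f
      = infsum (coef_shift j
          (\<lambda>m. of_real (arv_weight (m + mi_unit j)) * cinner_y J (c m) (a (m + mi_unit j)))) UNIV"
    unfolding arv_inner_def arv_coef_eqI[OF arv_series_mult_coord[OF g]] arv_coef_eqI[OF f]
    by (intro infsum_cong) (simp add: coef_shift_def diff_mi_unit_add)
  also have "\<dots> = (\<Sum>\<^sub>\<infinity>m. of_real (arv_weight (m + mi_unit j)) * cinner_y J (c m) (a (m + mi_unit j)))"
    by (rule infsum_coef_shift)
  also have "\<dots> = arv_inner J g h"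
    unfolding arv_inner_def arv_coef_eqI[OF g] arv_coef_eqI[OF h]
    by (intro infsum_cong) (simp add: coef_backshift_def arv_weight_add_mi_unit cinner_y_scaleR_right)
  finally show ?thesis .
qed

lemma mult_coord_adj_eqI:
  assumes f: "f \<in> arveson_space J" and h: "h \<in> arveson_space J"
    and coef: "arv_coef J h = coef_backshift j (arv_coef J f)"
  shows "mult_coord_adj J j f = h"
  unfolding mult_coord_adj_def
proof (rule the_equality)
  have adjoint: "arv_inner J (mult_coord J j g) f = arv_inner J g h" if "g \<in> arveson_space J" for g
    using arv_inner_mult_coord[OF arveson_spaceD(1)[OF that] arveson_spaceD(1)[OF f]]
      arveson_spaceD(1)[OF h] coef by simp
  then show "h \<in> arveson_space J \<and>
      (\<forall>g\<in>arveson_space J. arv_inner J (mult_coord J j g) f = arv_inner J g h)"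
    using h by blast
  fix h'
  assume "h' \<in> arveson_space J \<and>
    (\<forall>g\<in>arveson_space J. arv_inner J (mult_coord J j g) f = arv_inner J g h')"
  then show "h' = h"
    using h adjoint by (intro arv_inner_extensionality) auto
qed

lemma arv_coef_coord_decomposition:
  fixes f :: "complex^'d::finite \<Rightarrow> 'y" and g :: "'d \<Rightarrow> complex^'d \<Rightarrow> 'y"
  assumes "\<And>i. g i \<in> arveson_space J"
    and decomp: "\<And>z. z \<in> unit_ball_d \<Longrightarrow> f z - f 0 = (\<Sum>i\<in>UNIV. scaleJ J (z $ i) (g i z))"
  shows "arv_coef J f
    = (\<lambda>n. (if n = 0 then f 0 else 0) + (\<Sum>i\<in>UNIV. coef_shift i (arv_coef J (g i)) n))"
proof (rule arv_coef_eqI, unfold arv_series_def, intro ballI)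
  fix z :: "complex^'d" assume z: "z \<in> unit_ball_d"
  have "((\<lambda>n. scaleJ J (mono_pow z n) (if n = 0 then f 0 else 0)) has_sum f 0) UNIV"
    by (rule has_sum_finite_neutralI[where B="{0}"]) auto
  moreover have "((\<lambda>n. \<Sum>i\<in>UNIV. scaleJ J (mono_pow z n) (coef_shift i (arv_coef J (g i)) n))
      has_sum (\<Sum>i\<in>UNIV. scaleJ J (z $ i) (g i z))) UNIV"
    using arveson_spaceD(1)[OF assms(1)] z
    by (intro has_sum_sum has_sum_scaleJ_coef_shift) (auto simp: arv_series_def)
  ultimately have "((\<lambda>n. scaleJ J (mono_pow z n) (if n = 0 then f 0 else 0)
      + (\<Sum>i\<in>UNIV. scaleJ J (mono_pow z n) (coef_shift i (arv_coef J (g i)) n)))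
      has_sum f 0 + (\<Sum>i\<in>UNIV. scaleJ J (z $ i) (g i z))) UNIV"
    by (rule has_sum_add)
  moreover have "f 0 + (\<Sum>i\<in>UNIV. scaleJ J (z $ i) (g i z)) = f z"
    using decomp[OF z] by (metis add.commute diff_add_cancel)
  ultimately show "((\<lambda>n. scaleJ J (mono_pow z n) ((if n = 0 then f 0 else 0)
      + (\<Sum>i\<in>UNIV. coef_shift i (arv_coef J (g i)) n))) has_sum f z) UNIV"
    by (simp add: scaleJ_add_right scaleJ_sum_right)
qed

end

section \<open>The coefficients of the operators T_j\<close>

lemma sum_norm_sq_divide_minus_norm_sq_sum:
  fixes \<beta> :: "'i \<Rightarrow> 'a::real_inner"
  assumes "\<And>j. j \<in> I \<Longrightarrow> 0 < q j" and "(\<Sum>j\<in>I. q j) = 1" and "a = (\<Sum>j\<in>I. \<beta> j)"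
  shows "(\<Sum>j\<in>I. (norm (\<beta> j))\<^sup>2 / q j) - (norm a)\<^sup>2 = (\<Sum>j\<in>I. q j * (norm (\<beta> j /\<^sub>R q j - a))\<^sup>2)"
proof -
  have "q j * (norm (\<beta> j /\<^sub>R q j - a))\<^sup>2 = (norm (\<beta> j))\<^sup>2 / q j - 2 * inner (\<beta> j) a + q j * (norm a)\<^sup>2"
    if "j \<in> I" for j
  proof -
    have "(norm (\<beta> j /\<^sub>R q j - a))\<^sup>2 = inner (\<beta> j /\<^sub>R q j - a) (\<beta> j /\<^sub>R q j - a)"
      by (simp add: power2_norm_eq_inner)
    also have "\<dots> = inner (\<beta> j) (\<beta> j) / (q j)\<^sup>2 - 2 * inner (\<beta> j) a / q j + inner a a"
      by (simp add: inner_diff_left inner_diff_right inner_commute power2_eq_square field_simps)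
    finally have "(norm (\<beta> j /\<^sub>R q j - a))\<^sup>2
        = (norm (\<beta> j))\<^sup>2 / (q j)\<^sup>2 - 2 * inner (\<beta> j) a / q j + (norm a)\<^sup>2"
      by (simp add: power2_norm_eq_inner)
    then show ?thesis
      using assms(1)[OF that] by (simp add: field_simps power2_eq_square)
  qed
  then have "(\<Sum>j\<in>I. q j * (norm (\<beta> j /\<^sub>R q j - a))\<^sup>2)
      = (\<Sum>j\<in>I. (norm (\<beta> j))\<^sup>2 / q j) - 2 * inner (\<Sum>j\<in>I. \<beta> j) a + (\<Sum>j\<in>I. q j) * (norm a)\<^sup>2"
    by (simp add: sum.distrib sum_subtractf sum_distrib_left sum_distrib_right inner_sum_left)
  then show ?thesis
    using assms(2,3) by (simp add: power2_norm_eq_inner)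
qed

lemma coef_shift_norm_defect:
  fixes a :: "nat^'d::finite \<Rightarrow> 'a::real_inner" and b :: "'d \<Rightarrow> nat^'d \<Rightarrow> 'a"
  assumes "n \<noteq> 0" and a: "a n = (\<Sum>j\<in>UNIV. coef_shift j (b j) n)"
  defines "q j \<equiv> real (n $ j) / real (abs_mi n)"
  shows "(\<Sum>j\<in>UNIV. coef_shift j (\<lambda>m. arv_weight m * (norm (b j m))\<^sup>2) n) - arv_weight n * (norm (a n))\<^sup>2
    = arv_weight n * (\<Sum>j | 0 < n $ j. q j * (norm (b j (n - mi_unit j) /\<^sub>R q j - a n))\<^sup>2)"
proof -
  define I where "I = {j. 0 < n $ j}"
  have abs_n: "0 < real (abs_mi n)"
    using abs_mi_pos[OF \<open>n \<noteq> 0\<close>] by simp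
  have q_pos: "0 < q j" if "j \<in> I" for j
    using that abs_n by (simp add: q_def I_def)
  have "(\<Sum>j\<in>I. q j) = (\<Sum>j\<in>UNIV. q j)"
    by (rule sum.mono_neutral_left) (auto simp: I_def q_def)
  also have "\<dots> = 1"
    using abs_n by (simp add: q_def abs_mi_def sum_divide_distrib[symmetric])
  finally have q_sum: "(\<Sum>j\<in>I. q j) = 1" .
  have "a n = (\<Sum>j\<in>I. b j (n - mi_unit j))"
    unfolding a by (rule sum.mono_neutral_cong_right) (auto simp: I_def coef_shift_def)
  note defect = sum_norm_sq_divide_minus_norm_sq_sum[OF q_pos q_sum this]
  have "(\<Sum>j\<in>UNIV. coef_shift j (\<lambda>m. arv_weight m * (norm (b j m))\<^sup>2) n)
      = (\<Sum>j\<in>I. arv_weight n * ((norm (b j (n - mi_unit j)))\<^sup>2 / q j))"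
    by (rule sum.mono_neutral_cong_right)
      (auto simp: I_def coef_shift_def arv_weight_diff_mi_unit q_def)
  also have "\<dots> = arv_weight n * (\<Sum>j\<in>I. (norm (b j (n - mi_unit j)))\<^sup>2 / q j)"
    by (simp add: sum_distrib_left)
  finally show ?thesis
    using defect by (simp add: I_def flip: right_diff_distrib)
qed

lemma coef_shift_norm_eq_if_norm_le:
  fixes a :: "nat^'d::finite \<Rightarrow> 'a::real_inner" and b :: "'d \<Rightarrow> nat^'d \<Rightarrow> 'a"
  assumes rel: "\<And>n. a n = (if n = 0 then a\<^sub>0 else 0) + (\<Sum>j\<in>UNIV. coef_shift j (b j) n)"
    and summable_a: "(\<lambda>n. arv_weight n * (norm (a n))\<^sup>2) summable_on UNIV"
    and summable_b: "\<And>j. (\<lambda>n. arv_weight n * (norm (b j n))\<^sup>2) summable_on UNIV"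
    and le: "(\<Sum>j\<in>UNIV. \<Sum>\<^sub>\<infinity>n. arv_weight n * (norm (b j n))\<^sup>2)
      \<le> (\<Sum>\<^sub>\<infinity>n. arv_weight n * (norm (a n))\<^sup>2) - (norm a\<^sub>0)\<^sup>2"
  shows "(\<Sum>j\<in>UNIV. coef_shift j (\<lambda>m. arv_weight m * (norm (b j m))\<^sup>2) n)
    = arv_weight n * (norm (a n))\<^sup>2 - (if n = 0 then (norm a\<^sub>0)\<^sup>2 else 0)"
proof -
  define D where "D n = (\<Sum>j\<in>UNIV. coef_shift j (\<lambda>m. arv_weight m * (norm (b j m))\<^sup>2) n)
    - (arv_weight n * (norm (a n))\<^sup>2 - (if n = 0 then (norm a\<^sub>0)\<^sup>2 else 0))" for n
  have "(D has_sum (\<Sum>j\<in>UNIV. \<Sum>\<^sub>\<infinity>n. arv_weight n * (norm (b j n))\<^sup>2)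
      - ((\<Sum>\<^sub>\<infinity>n. arv_weight n * (norm (a n))\<^sup>2) - (norm a\<^sub>0)\<^sup>2)) UNIV"
    unfolding D_def
  proof (intro has_sum_diff has_sum_sum)
    show "(coef_shift j (\<lambda>m. arv_weight m * (norm (b j m))\<^sup>2) has_sum
        (\<Sum>\<^sub>\<infinity>n. arv_weight n * (norm (b j n))\<^sup>2)) UNIV" for j
      using summable_b by (simp add: has_sum_coef_shift_iff)
    show "((\<lambda>n. arv_weight n * (norm (a n))\<^sup>2) has_sum (\<Sum>\<^sub>\<infinity>n. arv_weight n * (norm (a n))\<^sup>2)) UNIV"
      using summable_a by simp
    show "((\<lambda>n. if n = 0 then (norm a\<^sub>0)\<^sup>2 else 0) has_sum (norm a\<^sub>0)\<^sup>2) UNIV"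
      by (rule has_sum_finite_neutralI[where B="{0}"]) auto
  qed simp
  moreover have "0 \<le> D n" for n
  proof (cases "n = 0")
    case False
    with rel[of n] have "a n = (\<Sum>j\<in>UNIV. coef_shift j (b j) n)"
      by simp
    from coef_shift_norm_defect[where a=a and b=b, OF False this] show ?thesis
      using False arv_weight_pos[of n]
      by (simp add: D_def zero_le_mult_iff sum_nonneg)
  qed (simp add: D_def rel[of 0])
  ultimately have "D n = 0"
    using le by (intro nonneg_infsum_le_0D[of D UNIV]) (auto simp: infsumI has_sum_imp_summable)
  then show ?thesis
    by (simp add: D_def)
qed

lemma coef_eq_backshift_if_norm_le:
  fixes a :: "nat^'d::finite \<Rightarrow> 'a::real_inner" and b :: "'d \<Rightarrow> nat^'d \<Rightarrow> 'a"
  assumes rel: "\<And>n. a n = (if n = 0 then a\<^sub>0 else 0) + (\<Sum>j\<in>UNIV. coef_shift j (b j) n)"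
    and summable_a: "(\<lambda>n. arv_weight n * (norm (a n))\<^sup>2) summable_on UNIV"
    and summable_b: "\<And>j. (\<lambda>n. arv_weight n * (norm (b j n))\<^sup>2) summable_on UNIV"
    and le: "(\<Sum>j\<in>UNIV. \<Sum>\<^sub>\<infinity>n. arv_weight n * (norm (b j n))\<^sup>2)
      \<le> (\<Sum>\<^sub>\<infinity>n. arv_weight n * (norm (a n))\<^sup>2) - (norm a\<^sub>0)\<^sup>2"
  shows "b j = coef_backshift j a"
proof
  fix m
  define n where "n = m + mi_unit j"
  define q where "q i = real (n $ i) / real (abs_mi n)" for i
  have "n \<noteq> 0" and "0 < n $ j"
    by (auto simp: n_def vec_eq_iff)
  then have "0 < q j"
    by (simp add: q_def abs_mi_pos)
  have "a n = (\<Sum>j\<in>UNIV. coef_shift j (b j) n)"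
    using rel[of n] \<open>n \<noteq> 0\<close> by simp
  from coef_shift_norm_defect[where a=a and b=b, OF \<open>n \<noteq> 0\<close> this]
  have "arv_weight n * (\<Sum>i | 0 < n $ i. q i * (norm (b i (n - mi_unit i) /\<^sub>R q i - a n))\<^sup>2) = 0"
    using coef_shift_norm_eq_if_norm_le[OF assms, of n] \<open>n \<noteq> 0\<close> by (simp add: q_def)
  then have "\<forall>i\<in>{i. 0 < n $ i}. q i * (norm (b i (n - mi_unit i) /\<^sub>R q i - a n))\<^sup>2 = 0"
    using arv_weight_pos[of n] by (subst sum_nonneg_eq_0_iff[symmetric]) (auto simp: q_def)
  then have "q j * (norm (b j (n - mi_unit j) /\<^sub>R q j - a n))\<^sup>2 = 0"
    using \<open>0 < n $ j\<close> by blast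
  then have "b j m /\<^sub>R q j = a n"
    using \<open>0 < q j\<close> by (simp add: n_def)
  then have "b j m = q j *\<^sub>R a n"
    using \<open>0 < q j\<close> by (metis divideR_right less_numeral_extra(3))
  then show "b j m = coef_backshift j a m"
    by (simp add: coef_backshift_def q_def n_def abs_mi_add_mi_unit)
qed

theorem theorem3p22:
  fixes J :: "'y::{real_inner,complete_space} \<Rightarrow> 'y"
    and M :: "(complex^'d::finite \<Rightarrow> 'y) set"
    and T :: "'d \<Rightarrow> (complex^'d \<Rightarrow> 'y) \<Rightarrow> (complex^'d \<Rightarrow> 'y)"
  assumes "complex_structure J"
    and "isometric_hilbert_subspace J M"
    and "\<And>j. bounded_op_on J M (T j)"
    and "\<And>f z. f \<in> M \<Longrightarrow> z \<in> unit_ball_d \<Longrightarrow>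
           f z - f 0 = (\<Sum>j\<in>UNIV. scaleJ J (z $ j) (T j f z))"
    and "\<And>f. f \<in> M \<Longrightarrow>
           (\<Sum>j\<in>UNIV. (arv_norm J (T j f))\<^sup>2) \<le> (arv_norm J f)\<^sup>2 - (norm (f 0))\<^sup>2"
  shows "\<forall>j. \<forall>f\<in>M. mult_coord_adj J j f \<in> M \<and> T j f = mult_coord_adj J j f"
proof (intro allI ballI)
  fix j f
  assume "f \<in> M"
  interpret complex_structured_space J
    by (rule complex_structured_space.intro) fact
  have "M \<subseteq> arveson_space J" and "T i f \<in> M" for i
    using assms(2,3) \<open>f \<in> M\<close> by (auto simp: isometric_hilbert_subspace_def bounded_op_on_def)
  then have f: "f \<in> arveson_space J" and Tf: "T i f \<in> arveson_space J" for i
    using \<open>f \<in> M\<close> by auto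
  have "arv_coef J (T j f) = coef_backshift j (arv_coef J f)"
  proof (rule coef_eq_backshift_if_norm_le)
    show "arv_coef J f n
        = (if n = 0 then f 0 else 0) + (\<Sum>i\<in>UNIV. coef_shift i (arv_coef J (T i f)) n)" for n
      using arv_coef_coord_decomposition[OF Tf assms(4)[OF \<open>f \<in> M\<close>]] by simp
  qed (use assms(5)[OF \<open>f \<in> M\<close>] arveson_spaceD(2)[OF f] arveson_spaceD(2)[OF Tf] in
      \<open>simp_all add: arv_norm_power2\<close>)
  then have "mult_coord_adj J j f = T j f"
    by (rule mult_coord_adj_eqI[OF f Tf])
  then show "mult_coord_adj J j f \<in> M \<and> T j f = mult_coord_adj J j f"
    using \<open>T j f \<in> M\<close> by simp
qed

end
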